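(* Consider a common interest game and fix, for each $i$, parameters $\lambda^i\in[0,1]$, $\gamma^i,\kappa^i\in(0,1)$ and a stochastic kernel $h^i\in\mathcal{P}(\Pi^i\mid\Pi^i\times 2^{\Pi^i})$. Let $\{\bm{\pi}_k\}_{k\ge0}$ be the time-homogeneous Markov chain on $\bm{\Pi}$ generated by the Idealized Update Procedure (defined in the context), with transition matrix $A_{\bm{\gamma},\bm{\kappa},\mathbf{h}}$, where $\bm{\gamma}=(\gamma^i)_i$, $\bm{\kappa}=(\kappa^i)_i$, $\mathbf{h}=(h^i)_i$. Then this chain has a unique stationary distribution $\mu^*_{\bm{\gamma},\bm{\kappa},\mathbf{h}}$, and for every $\mu_0\in\mathcal{P}(\bm{\Pi})$, $\lim_{n\to\infty}\mu_0A^n_{\bm{\gamma},\bm{\kappa},\mathbf{h}}=\mu^*_{\bm{\gamma},\bm{\kappa},\mathbf{h}}$. Moreover, for every $\epsilon\in(0,1)$ and every $\bm{\kappa}\in(0,1)^N$ there exists $\bar{\gamma}_\epsilon(\bm{\kappa})>0$ such that, if $\gamma^i\in(0,\bar{\gamma}_\epsilon(\bm{\kappa}))$ for all $i$ (and for every choice of $\lambda^i$ and $h^i$), then \[ \mu^*_{\bm{\gamma},\bm{\kappa},\mathbf{h}}(\bm{\Pi}_{\rm opt})\ge 1-\epsilon/2 . \]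
   Context: Game setup: a finite discounted stochastic game with $N$ decision makers, finite state set $\mathbb{X}$, finite action sets $\mathbb{U}^i$, discount factors $\beta^i\in(0,1)$, costs $c^i:\mathbb{X}\times\mathbb{U}\to\mathbb{R}$ ($\mathbb{U}=\times_i\mathbb{U}^i$), and transition kernel $P(\cdot\mid x,\mathbf{u})$. $\Pi^i$ is the (finite) set of maps $\mathbb{X}\to\mathbb{U}^i$, $\bm{\Pi}=\times_i\Pi^i$, $\bm{\Pi}^{-i}=\times_{j\neq i}\Pi^j$, $\bm{\pi}=(\pi^i,\bm{\pi}^{-i})$. $J^i_x(\bm{\pi})=E[\sum_{t\ge0}(\beta^i)^tc^i(x_t,\bm{\pi}(x_t))\mid x_0=x]$ with $x_{t+1}\sim P(\cdot\mid x_t,\bm{\pi}(x_t))$. $\pi^i\in\Pi^i$ is a best reply to $\bm{\pi}^{-i}$ if $J^i_x(\pi^i,\bm{\pi}^{-i})=\min_{\sigma^i\in\Pi^i}J^i_x(\sigma^i,\bm{\pi}^{-i})$ for all $x$; $\mathrm{BR}^i(\bm{\pi}^{-i})\subseteq\Pi^i$ denotes the (nonempty) set of best replies. $\bm{\Pi}_{\rm opt}=\{\bm{\pi}^*:J^i_x(\bm{\pi}^* )=\inf_{\bm{\pi}\in\bm{\Pi}}J^i_x(\bm{\pi})\ \forall i,x\}$. Common interest game: $\bm{\Pi}_{\rm opt}\ne\emptyset$ and for all $\tilde{\bm{\pi}}\notin\bm{\Pi}_{\rm opt}$ and all $i$, $\inf_{\bm{\pi}}\sum_xJ^i_x(\bm{\pi})<\sum_xJ^i_x(\tilde{\bm{\pi}})$.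 Inertial best reply kernel: for $\lambda\in[0,1]$, $R^{i,\lambda}(\tilde\pi^i\mid\pi^i,B^i)$ equals $1$ if $\pi^i\in B^i$ and $\tilde\pi^i=\pi^i$; $\lambda$ if $\pi^i\notin B^i$ and $\tilde\pi^i=\pi^i$; $(1-\lambda)/|B^i|$ if $\pi^i\notin B^i$ and $\tilde\pi^i\in B^i$; $0$ otherwise ($\pi^i,\tilde\pi^i\in\Pi^i$, $B^i\subseteq\Pi^i$). $\mathcal{P}(\Pi^i\mid\Pi^i\times2^{\Pi^i})$ is the set of stochastic kernels assigning a probability distribution on $\Pi^i$ to each pair $(\pi^i,B^i)$. $\mathrm{Unif}(\Pi^i)$ is the uniform distribution. Idealized Update Procedure (IUP): given $\bm{\pi}_k$, the DMs choose $\pi^i_{{k+1}}$ conditionally independently: if $\bm{\pi}_k\in\bm{\Pi}_{\rm opt}$, $\pi^i_{k+1}\sim(1-\gamma^i)R^{i,\lambda^i}(\cdot\mid\pi^i_k,\mathrm{BR}^i(\bm{\pi}^{-i}_k))+\gamma^i\,\mathrm{Unif}(\Pi^i)$; if $\bm{\pi}_k\notin\bm{\Pi}_{\rm opt}$, $\pi^i_{k+1}\sim(1-\kappa^i)h^i(\cdot\mid\pi^i_k,\mathrm{BR}^i(\bm{\pi}^{-i}_k))+\kappa^i\,\mathrm{Unif}(\Pi^i)$. *)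

theory Defs
  imports "HOL-Analysis.Analysis"
begin

text \<open>Players are indexed by i < N. Actions of all players live in a common type 'u,
  player i's action set being Us i (finite, nonempty).
  The joint action at state x under joint policy pol is (\<lambda>j. pol j x).
  P x u y is the probability of moving from x to y under joint action u.\<close>

definition Pol :: "(nat \<Rightarrow> 'u set) \<Rightarrow> nat \<Rightarrow> ('x \<Rightarrow> 'u) set" where
  "Pol Us i = {f. \<forall>x. f x \<in> Us i}"

definition Pis :: "nat \<Rightarrow> (nat \<Rightarrow> 'u set) \<Rightarrow> (nat \<Rightarrow> 'x \<Rightarrow> 'u) set" where
  "Pis N Us = PiE {..<N} (Pol Us)"

definition joint_actions :: "nat \<Rightarrow> (nat \<Rightarrow> 'u set) \<Rightarrow> (nat \<Rightarrow> 'u) set" where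
  "joint_actions N Us = PiE {..<N} Us"

fun pstep :: "('x::finite \<Rightarrow> (nat \<Rightarrow> 'u) \<Rightarrow> 'x \<Rightarrow> real) \<Rightarrow> (nat \<Rightarrow> 'x \<Rightarrow> 'u) \<Rightarrow> nat \<Rightarrow> 'x \<Rightarrow> 'x \<Rightarrow> real" where
  "pstep P pol 0 x y = (if x = y then 1 else 0)"
| "pstep P pol (Suc n) x y = (\<Sum>z\<in>UNIV. pstep P pol n x z * P z (\<lambda>j. pol j z) y)"

definition J :: "(nat \<Rightarrow> real) \<Rightarrow> (nat \<Rightarrow> 'x::finite \<Rightarrow> (nat \<Rightarrow> 'u) \<Rightarrow> real)
    \<Rightarrow> ('x \<Rightarrow> (nat \<Rightarrow> 'u) \<Rightarrow> 'x \<Rightarrow> real) \<Rightarrow> nat \<Rightarrow> (nat \<Rightarrow> 'x \<Rightarrow> 'u) \<Rightarrow> 'x \<Rightarrow> real" where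
  "J beta c P i pol x =
     (\<Sum>t. beta i ^ t * (\<Sum>y\<in>UNIV. pstep P pol t x y * c i y (\<lambda>j. pol j y)))"

definition BR :: "(nat \<Rightarrow> 'u set) \<Rightarrow> (nat \<Rightarrow> real) \<Rightarrow> (nat \<Rightarrow> 'x::finite \<Rightarrow> (nat \<Rightarrow> 'u) \<Rightarrow> real)
    \<Rightarrow> ('x \<Rightarrow> (nat \<Rightarrow> 'u) \<Rightarrow> 'x \<Rightarrow> real) \<Rightarrow> nat \<Rightarrow> (nat \<Rightarrow> 'x \<Rightarrow> 'u) \<Rightarrow> ('x \<Rightarrow> 'u) set" where
  "BR Us beta c P i pol = {s \<in> Pol Us i. \<forall>x.
      J beta c P i (pol(i := s)) x = (MIN s' \<in> Pol Us i. J beta c P i (pol(i := s')) x)}"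

definition Pi_opt :: "nat \<Rightarrow> (nat \<Rightarrow> 'u set) \<Rightarrow> (nat \<Rightarrow> real) \<Rightarrow> (nat \<Rightarrow> 'x::finite \<Rightarrow> (nat \<Rightarrow> 'u) \<Rightarrow> real)
    \<Rightarrow> ('x \<Rightarrow> (nat \<Rightarrow> 'u) \<Rightarrow> 'x \<Rightarrow> real) \<Rightarrow> (nat \<Rightarrow> 'x \<Rightarrow> 'u) set" where
  "Pi_opt N Us beta c P = {p \<in> Pis N Us. \<forall>i<N. \<forall>x.
      J beta c P i p x = (INF q \<in> Pis N Us. J beta c P i q x)}"

definition common_interest :: "nat \<Rightarrow> (nat \<Rightarrow> 'u set) \<Rightarrow> (nat \<Rightarrow> real) \<Rightarrow> (nat \<Rightarrow> 'x::finite \<Rightarrow> (nat \<Rightarrow> 'u) \<Rightarrow> real)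
    \<Rightarrow> ('x \<Rightarrow> (nat \<Rightarrow> 'u) \<Rightarrow> 'x \<Rightarrow> real) \<Rightarrow> bool" where
  "common_interest N Us beta c P \<longleftrightarrow>
     Pi_opt N Us beta c P \<noteq> {} \<and>
     (\<forall>pt \<in> Pis N Us - Pi_opt N Us beta c P. \<forall>i<N.
        (INF p \<in> Pis N Us. \<Sum>x\<in>UNIV. J beta c P i p x) < (\<Sum>x\<in>UNIV. J beta c P i pt x))"

definition Rin :: "real \<Rightarrow> 'p \<Rightarrow> 'p set \<Rightarrow> 'p \<Rightarrow> real" where
  "Rin lam s B s' =
     (if s \<in> B then (if s' = s then 1 else 0)
      else if s' = s then lam
      else if s' \<in> B then (1 - lam) / real (card B)
      else 0)"

definition stoch_kernel :: "'p set \<Rightarrow> ('p \<Rightarrow> 'p set \<Rightarrow> 'p \<Rightarrow> real) \<Rightarrow> bool" where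
  "stoch_kernel S h \<longleftrightarrow> (\<forall>s\<in>S. \<forall>B. B \<subseteq> S \<longrightarrow>
      (\<forall>s'\<in>S. 0 \<le> h s B s') \<and> (\<Sum>s'\<in>S. h s B s') = 1)"

definition IUP_player :: "nat \<Rightarrow> (nat \<Rightarrow> 'u set) \<Rightarrow> (nat \<Rightarrow> real) \<Rightarrow> (nat \<Rightarrow> 'x::finite \<Rightarrow> (nat \<Rightarrow> 'u) \<Rightarrow> real)
    \<Rightarrow> ('x \<Rightarrow> (nat \<Rightarrow> 'u) \<Rightarrow> 'x \<Rightarrow> real)
    \<Rightarrow> (nat \<Rightarrow> real) \<Rightarrow> (nat \<Rightarrow> real) \<Rightarrow> (nat \<Rightarrow> real)
    \<Rightarrow> (nat \<Rightarrow> ('x \<Rightarrow> 'u) \<Rightarrow> ('x \<Rightarrow> 'u) set \<Rightarrow> ('x \<Rightarrow> 'u) \<Rightarrow> real)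
    \<Rightarrow> nat \<Rightarrow> (nat \<Rightarrow> 'x \<Rightarrow> 'u) \<Rightarrow> ('x \<Rightarrow> 'u) \<Rightarrow> real" where
  "IUP_player N Us beta c P lam gam kap h i p s =
     (if p \<in> Pi_opt N Us beta c P
      then (1 - gam i) * Rin (lam i) (p i) (BR Us beta c P i p) s + gam i / real (card (Pol Us i :: ('x \<Rightarrow> 'u) set))
      else (1 - kap i) * h i (p i) (BR Us beta c P i p) s + kap i / real (card (Pol Us i :: ('x \<Rightarrow> 'u) set)))"

text \<open>Transition matrix A of the IUP Markov chain on joint policies (players update
  conditionally independently).\<close>
definition IUP_matrix :: "nat \<Rightarrow> (nat \<Rightarrow> 'u set) \<Rightarrow> (nat \<Rightarrow> real) \<Rightarrow> (nat \<Rightarrow> 'x::finite \<Rightarrow> (nat \<Rightarrow> 'u) \<Rightarrow> real)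
    \<Rightarrow> ('x \<Rightarrow> (nat \<Rightarrow> 'u) \<Rightarrow> 'x \<Rightarrow> real)
    \<Rightarrow> (nat \<Rightarrow> real) \<Rightarrow> (nat \<Rightarrow> real) \<Rightarrow> (nat \<Rightarrow> real)
    \<Rightarrow> (nat \<Rightarrow> ('x \<Rightarrow> 'u) \<Rightarrow> ('x \<Rightarrow> 'u) set \<Rightarrow> ('x \<Rightarrow> 'u) \<Rightarrow> real)
    \<Rightarrow> (nat \<Rightarrow> 'x \<Rightarrow> 'u) \<Rightarrow> (nat \<Rightarrow> 'x \<Rightarrow> 'u) \<Rightarrow> real" where
  "IUP_matrix N Us beta c P lam gam kap h p q =
     (\<Prod>i<N. IUP_player N Us beta c P lam gam kap h i p (q i))"

definition is_dist :: "'p set \<Rightarrow> ('p \<Rightarrow> real) \<Rightarrow> bool" where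
  "is_dist S mu \<longleftrightarrow> (\<forall>p. 0 \<le> mu p) \<and> (\<forall>p. p \<notin> S \<longrightarrow> mu p = 0) \<and> sum mu S = 1"

definition stationary :: "'p set \<Rightarrow> ('p \<Rightarrow> 'p \<Rightarrow> real) \<Rightarrow> ('p \<Rightarrow> real) \<Rightarrow> bool" where
  "stationary S A mu \<longleftrightarrow> is_dist S mu \<and> (\<forall>q\<in>S. (\<Sum>p\<in>S. mu p * A p q) = mu q)"

fun dist_iter :: "'p set \<Rightarrow> ('p \<Rightarrow> 'p \<Rightarrow> real) \<Rightarrow> ('p \<Rightarrow> real) \<Rightarrow> nat \<Rightarrow> 'p \<Rightarrow> real" where
  "dist_iter S A mu0 0 = mu0"
| "dist_iter S A mu0 (Suc n) = (\<lambda>q. if q \<in> S then (\<Sum>p\<in>S. dist_iter S A mu0 n p * A p q) else 0)"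

definition finite_game :: "nat \<Rightarrow> (nat \<Rightarrow> 'u set) \<Rightarrow> (nat \<Rightarrow> real)
    \<Rightarrow> ('x::finite \<Rightarrow> (nat \<Rightarrow> 'u) \<Rightarrow> 'x \<Rightarrow> real) \<Rightarrow> bool" where
  "finite_game N Us beta P \<longleftrightarrow>
     (\<forall>i<N. finite (Us i) \<and> Us i \<noteq> {} \<and> 0 < beta i \<and> beta i < 1) \<and>
     (\<forall>x. \<forall>u\<in>joint_actions N Us. (\<forall>y. 0 \<le> P x u y) \<and> (\<Sum>y\<in>UNIV. P x u y) = 1)"

end

theory Submission
  imports Defs
begin

text \<open>Every entry of the transition matrix is bounded below by a positive constant, since each
  player explores uniformly with probability \<open>\<gamma>\<^sup>i\<close> or \<open>\<kappa>\<^sup>i\<close>. By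
  Doeblin's argument the matrix is then a strict contraction in \<open>\<ell>\<^sup>1\<close> on signed measures
  of total mass zero, which gives existence, uniqueness and global attractivity of the
  stationary distribution. For the concentration bound, a stationary distribution balances the
  flow into and out of \<open>\<Pi>\<^sub>o\<^sub>p\<^sub>t\<close>: from an optimal joint policy the chain leaves
  with probability at most \<open>\<Sum>\<^sub>i \<gamma>\<^sup>i\<close> (everybody already best-replies), while from
  any other policy it enters \<open>\<Pi>\<^sub>o\<^sub>p\<^sub>t\<close> with probability at least
  \<open>\<delta> = \<Prod>\<^sub>i \<kappa>\<^sup>i / |\<Pi>\<^sup>i|\<close>, which does not depend on \<open>\<gamma>\<close>. Hence
  \<open>\<delta> (1 - \<mu>(\<Pi>\<^sub>o\<^sub>p\<^sub>t)) \<le> \<Sum>\<^sub>i \<gamma>\<^sup>i\<close>.\<close>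

lemma dist_iter_add: "dist_iter S A mu0 (n + k) = dist_iter S A (dist_iter S A mu0 k) n"
  by (induction n) (simp_all only: add_Suc add_0 dist_iter.simps)

lemma dist_iter_stationary: "stationary S A mu \<Longrightarrow> dist_iter S A mu n = mu"
  by (induction n) (auto simp: stationary_def is_dist_def fun_eq_iff)

lemma is_dist_dist_iter:
  assumes "finite S" and nonneg: "\<And>p q. p \<in> S \<Longrightarrow> q \<in> S \<Longrightarrow> 0 \<le> A p q"
    and rows: "\<And>p. p \<in> S \<Longrightarrow> (\<Sum>q\<in>S. A p q) = 1" and "is_dist S mu0"
  shows "is_dist S (dist_iter S A mu0 n)"
proof (induction n)
  case (Suc n)
  then have nonneg_n: "\<And>p. 0 \<le> dist_iter S A mu0 n p" and mass_n: "sum (dist_iter S A mu0 n) S = 1"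
    by (auto simp: is_dist_def)
  have "sum (dist_iter S A mu0 (Suc n)) S = (\<Sum>p\<in>S. \<Sum>q\<in>S. dist_iter S A mu0 n p * A p q)"
    using sum.swap by simp
  also have "\<dots> = sum (dist_iter S A mu0 n) S"
    by (rule sum.cong) (simp_all add: sum_distrib_left[symmetric] rows)
  finally show ?case
    using nonneg_n nonneg mass_n by (auto simp: is_dist_def intro!: sum_nonneg)
qed (use assms in simp)

lemma l1_dist_le_two:
  assumes "is_dist S mu" "is_dist S nu"
  shows "(\<Sum>q\<in>S. \<bar>mu q - nu q\<bar>) \<le> 2"
proof -
  have "(\<Sum>q\<in>S. \<bar>mu q - nu q\<bar>) \<le> (\<Sum>q\<in>S. mu q + nu q)"
    using assms by (intro sum_mono) (auto simp: is_dist_def abs_le_iff)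
  also have "\<dots> = 2" using assms by (simp add: sum.distrib is_dist_def)
  finally show ?thesis .
qed

locale doeblin_chain =
  fixes S :: "'p set" and A :: "'p \<Rightarrow> 'p \<Rightarrow> real" and d :: real
  assumes finite_S: "finite S" and S_nonempty: "S \<noteq> {}" and d_pos: "0 < d"
    and entry_ge: "\<And>p q. p \<in> S \<Longrightarrow> q \<in> S \<Longrightarrow> d \<le> A p q"
    and row_sum: "\<And>p. p \<in> S \<Longrightarrow> (\<Sum>q\<in>S. A p q) = 1"
begin

definition rate :: real where "rate = 1 - d * real (card S)"

lemma entry_nonneg: "p \<in> S \<Longrightarrow> q \<in> S \<Longrightarrow> 0 \<le> A p q"
  using entry_ge d_pos by (meson less_le_trans less_imp_le)

lemma rate_nonneg: "0 \<le> rate"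
proof -
  obtain p where p: "p \<in> S" using S_nonempty by auto
  have "(\<Sum>q\<in>S. d) \<le> (\<Sum>q\<in>S. A p q)" using entry_ge p by (intro sum_mono) auto
  then show ?thesis using row_sum[OF p] by (simp add: rate_def mult.commute)
qed

lemma rate_less_one: "rate < 1"
  using d_pos finite_S S_nonempty by (simp add: rate_def card_gt_0_iff)

lemma is_dist_iter: "is_dist S mu0 \<Longrightarrow> is_dist S (dist_iter S A mu0 n)"
  using is_dist_dist_iter[OF finite_S entry_nonneg row_sum] .

text \<open>Lowering every entry by \<open>d\<close> does not change the image of a zero-sum vector, and the
  lowered matrix has row sums \<open>rate\<close>.\<close>

lemma l1_contraction:
  assumes zero_sum: "sum w S = 0"
  shows "(\<Sum>q\<in>S. \<bar>\<Sum>p\<in>S. w p * A p q\<bar>) \<le> rate * (\<Sum>p\<in>S. \<bar>w p\<bar>)"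
proof -
  have shift: "(\<Sum>p\<in>S. w p * A p q) = (\<Sum>p\<in>S. w p * (A p q - d))" for q
    using zero_sum by (simp add: right_diff_distrib sum_subtractf sum_distrib_right[symmetric])
  have "(\<Sum>q\<in>S. \<bar>\<Sum>p\<in>S. w p * A p q\<bar>) \<le> (\<Sum>q\<in>S. \<Sum>p\<in>S. \<bar>w p\<bar> * (A p q - d))"
  proof (rule sum_mono)
    fix q assume q: "q \<in> S"
    have "\<bar>\<Sum>p\<in>S. w p * (A p q - d)\<bar> \<le> (\<Sum>p\<in>S. \<bar>w p * (A p q - d)\<bar>)" by (rule sum_abs)
    also have "\<dots> = (\<Sum>p\<in>S. \<bar>w p\<bar> * (A p q - d))"
      using entry_ge q by (intro sum.cong) (auto simp: abs_mult)
    finally show "\<bar>\<Sum>p\<in>S. w p * A p q\<bar> \<le> (\<Sum>p\<in>S. \<bar>w p\<bar> * (A p q - d))" by (simp add: shift)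
  qed
  also have "\<dots> = (\<Sum>p\<in>S. \<bar>w p\<bar> * ((\<Sum>q\<in>S. A p q) - d * card S))"
    by (subst sum.swap) (simp add: sum_distrib_left[symmetric] sum_subtractf mult.commute)
  also have "\<dots> = rate * (\<Sum>p\<in>S. \<bar>w p\<bar>)"
    by (simp add: row_sum rate_def flip: sum_distrib_right)
  finally show ?thesis .
qed

lemma dist_iter_l1_contraction:
  assumes "is_dist S mu0" "is_dist S nu0"
  shows "(\<Sum>q\<in>S. \<bar>dist_iter S A mu0 n q - dist_iter S A nu0 n q\<bar>)
         \<le> rate ^ n * (\<Sum>q\<in>S. \<bar>mu0 q - nu0 q\<bar>)"
proof (induction n)
  case (Suc n)
  let ?w = "\<lambda>p. dist_iter S A mu0 n p - dist_iter S A nu0 n p"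
  have "sum ?w S = 0"
    using is_dist_iter[OF assms(1)] is_dist_iter[OF assms(2)] by (simp add: sum_subtractf is_dist_def)
  then have "(\<Sum>q\<in>S. \<bar>\<Sum>p\<in>S. ?w p * A p q\<bar>) \<le> rate * (\<Sum>p\<in>S. \<bar>?w p\<bar>)"
    by (rule l1_contraction)
  also have "\<dots> \<le> rate * (rate ^ n * (\<Sum>q\<in>S. \<bar>mu0 q - nu0 q\<bar>))"
    using Suc rate_nonneg by (rule mult_left_mono)
  finally show ?case
    by (simp add: sum_subtractf[symmetric] left_diff_distrib)
qed simp

lemma dist_iter_close:
  assumes "is_dist S mu0" "is_dist S nu0"
  shows "\<bar>dist_iter S A mu0 n p - dist_iter S A nu0 n p\<bar> \<le> 2 * rate ^ n"
proof (cases "p \<in> S")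
  case True
  then have "\<bar>dist_iter S A mu0 n p - dist_iter S A nu0 n p\<bar>
      \<le> (\<Sum>q\<in>S. \<bar>dist_iter S A mu0 n q - dist_iter S A nu0 n q\<bar>)"
    using finite_S by (intro member_le_sum) auto
  also have "\<dots> \<le> rate ^ n * (\<Sum>q\<in>S. \<bar>mu0 q - nu0 q\<bar>)"
    using assms by (rule dist_iter_l1_contraction)
  also have "\<dots> \<le> rate ^ n * 2"
    using assms rate_nonneg by (intro mult_left_mono l1_dist_le_two) auto
  finally show ?thesis by simp
next
  case False
  then show ?thesis
    using is_dist_iter[OF assms(1)] is_dist_iter[OF assms(2)] rate_nonneg by (simp add: is_dist_def)
qed

lemma rate_power_tendsto_zero: "(\<lambda>n. 2 * rate ^ n) \<longlonglongrightarrow> 0"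
  using rate_nonneg rate_less_one by (intro tendsto_mult_right_zero LIMSEQ_power_zero) simp

lemma dist_iter_tendsto_stationary:
  assumes "is_dist S mu0" and st: "stationary S A mu"
  shows "(\<lambda>n. dist_iter S A mu0 n p) \<longlonglongrightarrow> mu p"
proof -
  have "norm (dist_iter S A mu0 n p - mu p) \<le> 2 * rate ^ n" for n
    using dist_iter_close[OF assms(1), of mu] st dist_iter_stationary[OF st]
    by (simp add: stationary_def)
  then have "(\<lambda>n. dist_iter S A mu0 n p - mu p) \<longlonglongrightarrow> 0"
    by (intro Lim_null_comparison[OF _ rate_power_tendsto_zero]) simp
  then show ?thesis by (rule LIM_zero_cancel)
qed

lemma dist_iter_Cauchy:
  assumes "is_dist S mu0"
  shows "Cauchy (\<lambda>n. dist_iter S A mu0 n p)"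
  unfolding Cauchy_altdef2
proof (intro allI impI)
  fix e :: real assume "0 < e"
  then obtain M where M: "\<forall>n\<ge>M. 2 * rate ^ n < e"
    using LIMSEQ_D[OF rate_power_tendsto_zero] rate_nonneg by auto
  have "dist (dist_iter S A mu0 n p) (dist_iter S A mu0 M p) < e" if "M \<le> n" for n
  proof -
    have "dist_iter S A mu0 n = dist_iter S A (dist_iter S A mu0 (n - M)) M"
      using dist_iter_add[of S A mu0 M "n - M"] that by simp
    then show ?thesis
      using dist_iter_close[OF is_dist_iter[OF assms, of "n - M"] assms, of M p] M
      by (simp add: dist_real_def) (meson order_refl order_le_less_trans)
  qed
  then show "\<exists>M. \<forall>n\<ge>M. dist (dist_iter S A mu0 n p) (dist_iter S A mu0 M p) < e" by blast
qed

lemma stationary_exists: "\<exists>mu. stationary S A mu"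
proof -
  obtain p0 where p0: "p0 \<in> S" using S_nonempty by auto
  define mu0 where "mu0 p = (if p = p0 then 1 else 0 :: real)" for p
  have mu0: "is_dist S mu0" using p0 finite_S by (simp add: is_dist_def mu0_def)
  define mu where "mu p = lim (\<lambda>n. dist_iter S A mu0 n p)" for p
  have lim: "(\<lambda>n. dist_iter S A mu0 n p) \<longlonglongrightarrow> mu p" for p
    using dist_iter_Cauchy[OF mu0] unfolding mu_def by (simp add: Cauchy_convergent_iff convergent_LIMSEQ_iff)
  have iter: "\<And>n. is_dist S (dist_iter S A mu0 n)" using is_dist_iter[OF mu0] .
  have "stationary S A mu"
    unfolding stationary_def is_dist_def
  proof (intro conjI allI impI ballI)
    fix p
    show "0 \<le> mu p" using iter by (intro LIMSEQ_le_const[OF lim]) (auto simp: is_dist_def)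
    show "p \<notin> S \<Longrightarrow> mu p = 0"
      using iter lim[of p] by (simp add: is_dist_def LIMSEQ_const_iff)
  next
    have "(\<lambda>n. sum (dist_iter S A mu0 n) S) \<longlonglongrightarrow> sum mu S" by (intro tendsto_sum lim)
    then show "sum mu S = 1" using iter by (simp add: is_dist_def LIMSEQ_const_iff)
  next
    fix q assume q: "q \<in> S"
    have "(\<lambda>n. dist_iter S A mu0 (Suc n) q) \<longlonglongrightarrow> (\<Sum>p\<in>S. mu p * A p q)"
      using q by (simp, intro tendsto_sum tendsto_mult_right lim)
    moreover have "(\<lambda>n. dist_iter S A mu0 (Suc n) q) \<longlonglongrightarrow> mu q" using lim by (rule LIMSEQ_Suc)
    ultimately show "(\<Sum>p\<in>S. mu p * A p q) = mu q" by (rule LIMSEQ_unique)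
  qed
  then show ?thesis by blast
qed

theorem ergodic:
  "(\<exists>!mu. stationary S A mu) \<and>
   (\<forall>mu0 mu. is_dist S mu0 \<longrightarrow> stationary S A mu \<longrightarrow>
      (\<forall>p. (\<lambda>n. dist_iter S A mu0 n p) \<longlonglongrightarrow> mu p))"
proof -
  have unique: "nu = mu" if "stationary S A nu" "stationary S A mu" for nu mu
  proof
    fix p
    have "(\<lambda>n. dist_iter S A nu n p) \<longlonglongrightarrow> mu p"
      using that by (intro dist_iter_tendsto_stationary) (auto simp: stationary_def)
    then show "nu p = mu p" using dist_iter_stationary[OF that(1)] by (simp add: LIMSEQ_const_iff)
  qed
  show ?thesis using stationary_exists unique dist_iter_tendsto_stationary by blast
qed

end

text \<open>\<open>G\<close> bounds the probability of leaving \<open>K\<close>, \<open>\<delta>\<close> that of entering \<open>K\<close> from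
  outside; under a stationary distribution the two flows balance.\<close>

lemma stationary_mass_lower_bound:
  assumes "finite S" and KS: "K \<subseteq> S" and st: "stationary S A mu"
    and nonneg: "\<And>p q. p \<in> S \<Longrightarrow> q \<in> S \<Longrightarrow> 0 \<le> A p q"
    and stay: "\<And>p. p \<in> K \<Longrightarrow> 1 - G \<le> A p p"
    and enter: "\<And>p. p \<in> S - K \<Longrightarrow> \<delta> \<le> (\<Sum>q\<in>K. A p q)"
    and "0 \<le> G"
  shows "\<delta> * (1 - sum mu K) \<le> G"
proof -
  have mu_nonneg: "\<And>p. 0 \<le> mu p" and mu_S: "sum mu S = 1"
    and invariant: "\<And>q. q \<in> S \<Longrightarrow> (\<Sum>p\<in>S. mu p * A p q) = mu q"
    using st by (auto simp: stationary_def is_dist_def)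
  have finK: "finite K" using KS \<open>finite S\<close> by (rule finite_subset)
  have split_S: "sum f S = sum f (S - K) + sum f K" for f :: "_ \<Rightarrow> real"
    using KS \<open>finite S\<close> by (rule sum.subset_diff)
  let ?inflow = "\<lambda>p. \<Sum>q\<in>K. A p q"
  have "sum mu K = (\<Sum>q\<in>K. \<Sum>p\<in>S. mu p * A p q)"
    using invariant KS by (intro sum.cong) auto
  also have "\<dots> = (\<Sum>p\<in>S - K. mu p * ?inflow p) + (\<Sum>p\<in>K. mu p * ?inflow p)"
    by (subst sum.swap) (simp add: split_S sum_distrib_left)
  finally have balance: "sum mu K = (\<Sum>p\<in>S - K. mu p * ?inflow p) + (\<Sum>p\<in>K. mu p * ?inflow p)" .
  have "(\<Sum>p\<in>S - K. mu p * \<delta>) \<le> (\<Sum>p\<in>S - K. mu p * ?inflow p)"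
    using enter mu_nonneg by (intro sum_mono mult_left_mono) auto
  moreover have "(\<Sum>p\<in>K. mu p * (1 - G)) \<le> (\<Sum>p\<in>K. mu p * ?inflow p)"
  proof (intro sum_mono mult_left_mono)
    fix p assume p: "p \<in> K"
    have "A p p \<le> ?inflow p" using p finK KS nonneg by (intro member_le_sum) auto
    then show "1 - G \<le> ?inflow p" using stay[OF p] by linarith
  qed (rule mu_nonneg)
  moreover have "(\<Sum>p\<in>S - K. mu p * \<delta>) = \<delta> * (1 - sum mu K)"
  proof -
    have "sum mu (S - K) = 1 - sum mu K" using mu_S split_S[of mu] by simp
    then show ?thesis by (simp add: mult.commute flip: sum_distrib_left)
  qed
  moreover have "(\<Sum>p\<in>K. mu p * (1 - G)) = (1 - G) * sum mu K"
    by (simp add: sum_distrib_right[symmetric] mult.commute)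
  ultimately have "\<delta> * (1 - sum mu K) + (1 - G) * sum mu K \<le> sum mu K"
    using balance by linarith
  moreover have "G * sum mu K \<le> G"
  proof (rule mult_left_le)
    have "0 \<le> sum mu (S - K)" using mu_nonneg by (rule sum_nonneg)
    then show "sum mu K \<le> 1" using mu_S split_S[of mu] by linarith
  qed fact
  ultimately show ?thesis by (simp add: algebra_simps)
qed

lemma Pol_eq_PiE: "Pol Us i = Pi\<^sub>E (UNIV :: 'x set) (\<lambda>_. Us i)"
  by (auto simp: Pol_def PiE_def Pi_def extensional_def)

context
  fixes N :: nat and Us :: "nat \<Rightarrow> 'u set" and beta :: "nat \<Rightarrow> real"
    and c :: "nat \<Rightarrow> 'x::finite \<Rightarrow> (nat \<Rightarrow> 'u) \<Rightarrow> real"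
    and P :: "'x \<Rightarrow> (nat \<Rightarrow> 'u) \<Rightarrow> 'x \<Rightarrow> real"
  assumes game: "finite_game N Us beta P"
begin

lemma finite_Pol: "i < N \<Longrightarrow> finite (Pol Us i :: ('x \<Rightarrow> 'u) set)"
  using game unfolding Pol_eq_PiE finite_game_def by (intro finite_PiE) auto

lemma card_Pol_pos: "i < N \<Longrightarrow> 0 < card (Pol Us i :: ('x \<Rightarrow> 'u) set)"
  using game finite_Pol unfolding card_gt_0_iff Pol_eq_PiE finite_game_def
  by (auto simp: PiE_eq_empty_iff)

lemma finite_Pis: "finite (Pis N Us :: (nat \<Rightarrow> 'x \<Rightarrow> 'u) set)"
  unfolding Pis_def using finite_Pol by (intro finite_PiE) auto

lemma Pis_nonempty: "(Pis N Us :: (nat \<Rightarrow> 'x \<Rightarrow> 'u) set) \<noteq> {}"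
  using card_Pol_pos by (force simp: Pis_def PiE_eq_empty_iff)

lemma Pis_memD: "p \<in> Pis N Us \<Longrightarrow> i < N \<Longrightarrow> p i \<in> Pol Us i"
  by (auto simp: Pis_def)

lemma Pis_fun_upd: "p \<in> Pis N Us \<Longrightarrow> i < N \<Longrightarrow> s \<in> Pol Us i \<Longrightarrow> p(i := s) \<in> Pis N Us"
  by (auto simp: Pis_def PiE_def Pi_def extensional_def)

lemma Pi_opt_in_BR:
  assumes p: "p \<in> Pi_opt N Us beta c P" and i: "i < N"
  shows "p i \<in> BR Us beta c P i p"
proof -
  have pS: "p \<in> Pis N Us" using p by (simp add: Pi_opt_def)
  have le: "J beta c P i p x \<le> J beta c P i q x" if "q \<in> Pis N Us" for q x
  proof -
    have "J beta c P i p x = (INF q \<in> Pis N Us. J beta c P i q x)" using p i by (simp add: Pi_opt_def)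
    also have "\<dots> \<le> J beta c P i q x"
      using that finite_Pis by (intro cINF_lower bdd_below_finite) auto
    finally show ?thesis .
  qed
  have "(MIN s \<in> Pol Us i. J beta c P i (p(i := s)) x) = J beta c P i (p(i := p i)) x" for x
    using finite_Pol[OF i] Pis_memD[OF pS i] le Pis_fun_upd[OF pS i]
    by (intro Min_eqI) (auto intro!: image_eqI[where x = "p i"])
  then show ?thesis using Pis_memD[OF pS i] by (simp add: BR_def)
qed

lemma BR_subset_Pol: "BR Us beta c P i p \<subseteq> Pol Us i"
  by (auto simp: BR_def)

context
  fixes lam gam kap :: "nat \<Rightarrow> real" and h :: "nat \<Rightarrow> ('x \<Rightarrow> 'u) \<Rightarrow> ('x \<Rightarrow> 'u) set \<Rightarrow> ('x \<Rightarrow> 'u) \<Rightarrow> real"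
  assumes gam: "\<And>i. i < N \<Longrightarrow> 0 < gam i \<and> gam i < 1"
    and kap: "\<And>i. i < N \<Longrightarrow> 0 < kap i \<and> kap i < 1"
    and kernel: "\<And>i. i < N \<Longrightarrow> stoch_kernel (Pol Us i) (h i)"
begin

text \<open>At an optimal joint policy every player already best-replies.\<close>

lemma IUP_player_opt:
  assumes "p \<in> Pi_opt N Us beta c P" "i < N"
  shows "IUP_player N Us beta c P lam gam kap h i p s =
    (1 - gam i) * (if s = p i then 1 else 0) + gam i / card (Pol Us i :: ('x \<Rightarrow> 'u) set)"
  using assms Pi_opt_in_BR[OF assms] by (simp add: IUP_player_def Rin_def)

lemma IUP_player_nonopt:
  assumes "p \<notin> Pi_opt N Us beta c P"
  shows "IUP_player N Us beta c P lam gam kap h i p s =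
    (1 - kap i) * h i (p i) (BR Us beta c P i p) s + kap i / card (Pol Us i :: ('x \<Rightarrow> 'u) set)"
  using assms by (simp add: IUP_player_def)

lemma kernel_nonneg: "p \<in> Pis N Us \<Longrightarrow> i < N \<Longrightarrow> s \<in> Pol Us i \<Longrightarrow> 0 \<le> h i (p i) (BR Us beta c P i p) s"
  using kernel[of i] Pis_memD[of p i] BR_subset_Pol[of i p] unfolding stoch_kernel_def by blast

lemma kernel_sum: "p \<in> Pis N Us \<Longrightarrow> i < N \<Longrightarrow> (\<Sum>s\<in>Pol Us i. h i (p i) (BR Us beta c P i p) s) = 1"
  using kernel[of i] Pis_memD[of p i] BR_subset_Pol[of i p] unfolding stoch_kernel_def by blast

lemma IUP_player_sum:
  assumes p: "p \<in> Pis N Us" and i: "i < N"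
  shows "(\<Sum>s\<in>Pol Us i. IUP_player N Us beta c P lam gam kap h i p s) = 1"
  using finite_Pol[OF i] card_Pol_pos[OF i] Pis_memD[OF p i] kernel_sum[OF p i]
  by (cases "p \<in> Pi_opt N Us beta c P")
     (simp_all add: IUP_player_opt[OF _ i] IUP_player_nonopt card_gt_0_iff sum.distrib flip: sum_distrib_left)

lemma IUP_player_ge:
  assumes p: "p \<in> Pis N Us" and i: "i < N" and s: "s \<in> Pol Us i"
  shows "(if p \<in> Pi_opt N Us beta c P then gam i else kap i) / card (Pol Us i :: ('x \<Rightarrow> 'u) set)
          \<le> IUP_player N Us beta c P lam gam kap h i p s"
  using gam[OF i] kap[OF i] kernel_nonneg[OF p i s]
  by (cases "p \<in> Pi_opt N Us beta c P") (simp_all add: IUP_player_opt[OF _ i] IUP_player_nonopt)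

lemma IUP_matrix_row_sum:
  assumes p: "p \<in> Pis N Us"
  shows "(\<Sum>q\<in>Pis N Us. IUP_matrix N Us beta c P lam gam kap h p q) = 1"
proof -
  have "(\<Sum>q\<in>Pis N Us. IUP_matrix N Us beta c P lam gam kap h p q)
     = (\<Prod>i<N. \<Sum>s\<in>Pol Us i. IUP_player N Us beta c P lam gam kap h i p s)"
    unfolding IUP_matrix_def Pis_def using finite_Pol by (intro prod_sum_PiE[symmetric]) auto
  also have "\<dots> = 1" using IUP_player_sum[OF p] by simp
  finally show ?thesis .
qed

lemma IUP_matrix_ge:
  assumes p: "p \<in> Pis N Us" and q: "q \<in> Pis N Us"
  shows "(\<Prod>i<N. (if p \<in> Pi_opt N Us beta c P then gam i else kap i) / card (Pol Us i :: ('x \<Rightarrow> 'u) set))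
    \<le> IUP_matrix N Us beta c P lam gam kap h p q"
  unfolding IUP_matrix_def
  using gam kap card_Pol_pos IUP_player_ge[OF p _ Pis_memD[OF q]]
  by (intro prod_mono) (auto simp: less_imp_le)

lemma IUP_matrix_diag:
  assumes p: "p \<in> Pi_opt N Us beta c P"
  shows "1 - (\<Sum>i<N. gam i) \<le> IUP_matrix N Us beta c P lam gam kap h p p"
proof -
  have "1 - (\<Sum>i<N. gam i) \<le> (\<Prod>i<N. 1 - gam i)"
    using gam by (intro Weierstrass_prod_ineq) (auto simp: less_imp_le)
  also have "\<dots> \<le> IUP_matrix N Us beta c P lam gam kap h p p"
    unfolding IUP_matrix_def using gam card_Pol_pos
    by (intro prod_mono) (auto simp: IUP_player_opt[OF p] less_imp_le)
  finally show ?thesis .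
qed

lemma IUP_ergodic:
  "(\<exists>!mu. stationary (Pis N Us) (IUP_matrix N Us beta c P lam gam kap h) mu) \<and>
   (\<forall>mu0 mu. is_dist (Pis N Us) mu0 \<longrightarrow>
      stationary (Pis N Us) (IUP_matrix N Us beta c P lam gam kap h) mu \<longrightarrow>
      (\<forall>p. (\<lambda>n. dist_iter (Pis N Us) (IUP_matrix N Us beta c P lam gam kap h) mu0 n p) \<longlonglongrightarrow> mu p))"
proof -
  let ?d = "\<Prod>i<N. min (gam i) (kap i) / card (Pol Us i :: ('x \<Rightarrow> 'u) set)"
  have entry_ge: "?d \<le> IUP_matrix N Us beta c P lam gam kap h p q"
    if "p \<in> Pis N Us" "q \<in> Pis N Us" for p q
  proof -
    have "?d \<le> (\<Prod>i<N. (if p \<in> Pi_opt N Us beta c P then gam i else kap i) / card (Pol Us i :: ('x \<Rightarrow> 'u) set))"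
      using gam kap card_Pol_pos by (intro prod_mono) (auto simp: less_imp_le intro!: divide_right_mono)
    also have "\<dots> \<le> IUP_matrix N Us beta c P lam gam kap h p q" using that by (rule IUP_matrix_ge)
    finally show ?thesis .
  qed
  have "0 < ?d" using gam kap card_Pol_pos by (intro prod_pos) auto
  then have "doeblin_chain (Pis N Us) (IUP_matrix N Us beta c P lam gam kap h) ?d"
    using finite_Pis Pis_nonempty entry_ge IUP_matrix_row_sum by unfold_locales
  then show ?thesis by (rule doeblin_chain.ergodic)
qed

lemma IUP_stationary_mass_Pi_opt:
  assumes ne: "Pi_opt N Us beta c P \<noteq> {}"
    and st: "stationary (Pis N Us) (IUP_matrix N Us beta c P lam gam kap h) mu"
  shows "(\<Prod>i<N. kap i / card (Pol Us i :: ('x \<Rightarrow> 'u) set)) * (1 - (\<Sum>p\<in>Pi_opt N Us beta c P. mu p))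
         \<le> (\<Sum>i<N. gam i)"
proof (rule stationary_mass_lower_bound[OF finite_Pis _ st])
  let ?A = "IUP_matrix N Us beta c P lam gam kap h"
  show opt_sub: "Pi_opt N Us beta c P \<subseteq> Pis N Us" by (auto simp: Pi_opt_def)
  have bound_pos: "0 < (\<Prod>i<N. (if p \<in> Pi_opt N Us beta c P then gam i else kap i)
      / card (Pol Us i :: ('x \<Rightarrow> 'u) set))" for p
    using gam kap card_Pol_pos by (intro prod_pos) auto
  show "0 \<le> ?A p q" if "p \<in> Pis N Us" "q \<in> Pis N Us" for p q
    using bound_pos[of p] IUP_matrix_ge[OF that] by linarith
  then have inflow_ge: "?A p q \<le> (\<Sum>q'\<in>Pi_opt N Us beta c P. ?A p q')"
    if "p \<in> Pis N Us" "q \<in> Pi_opt N Us beta c P" for p q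
    using that opt_sub finite_subset[OF opt_sub finite_Pis] by (intro member_le_sum) auto
  show "1 - (\<Sum>i<N. gam i) \<le> ?A p p" if "p \<in> Pi_opt N Us beta c P" for p
    using that by (rule IUP_matrix_diag)
  show "(\<Prod>i<N. kap i / card (Pol Us i :: ('x \<Rightarrow> 'u) set)) \<le> (\<Sum>q\<in>Pi_opt N Us beta c P. ?A p q)"
    if "p \<in> Pis N Us - Pi_opt N Us beta c P" for p
  proof -
    obtain q where q: "q \<in> Pi_opt N Us beta c P" using ne by auto
    then show ?thesis
      using that IUP_matrix_ge[of p q] inflow_ge[of p q] opt_sub by auto
  qed
  show "0 \<le> (\<Sum>i<N. gam i)" using gam by (intro sum_nonneg) (simp add: less_imp_le)
qed

end

lemma IUP_stationary_concentrates:
  assumes ne: "Pi_opt N Us beta c P \<noteq> {}" and eps: "0 < eps"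
    and kap: "\<And>i. i < N \<Longrightarrow> 0 < kap i \<and> kap i < 1"
  obtains gbar where "0 < gbar"
    and "\<And>lam gam h mu. (\<And>i. i < N \<Longrightarrow> 0 < gam i \<and> gam i < 1 \<and> gam i < gbar) \<Longrightarrow>
           (\<And>i. i < N \<Longrightarrow> stoch_kernel (Pol Us i) (h i)) \<Longrightarrow>
           stationary (Pis N Us) (IUP_matrix N Us beta c P lam gam kap h) mu \<Longrightarrow>
           1 - eps / 2 \<le> (\<Sum>p\<in>Pi_opt N Us beta c P. mu p)"
proof
  define \<delta> where "\<delta> = (\<Prod>i<N. kap i / card (Pol Us i :: ('x \<Rightarrow> 'u) set))"
  have \<delta>_pos: "0 < \<delta>" unfolding \<delta>_def using kap card_Pol_pos by (intro prod_pos) auto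
  show "0 < eps * \<delta> / (2 * (N + 1))" using eps \<delta>_pos by simp
  fix lam gam h mu
  assume gam: "\<And>i. i < N \<Longrightarrow> 0 < gam i \<and> gam i < 1 \<and> gam i < eps * \<delta> / (2 * (N + 1))"
    and "\<And>i. i < N \<Longrightarrow> stoch_kernel (Pol Us i) (h i)"
    and "stationary (Pis N Us) (IUP_matrix N Us beta c P lam gam kap h) mu"
  then have "\<delta> * (1 - (\<Sum>p\<in>Pi_opt N Us beta c P. mu p)) \<le> (\<Sum>i<N. gam i)"
    unfolding \<delta>_def using kap ne by (intro IUP_stationary_mass_Pi_opt) auto
  also have "\<dots> \<le> N * (eps * \<delta> / (2 * (N + 1)))"
    using sum_mono[of "{..<N}" gam "\<lambda>_. eps * \<delta> / (2 * (N + 1))"] gam by (auto simp: less_imp_le)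
  also have "\<dots> \<le> \<delta> * (eps / 2)"
    using eps \<delta>_pos by (simp add: field_simps)
  finally show "1 - eps / 2 \<le> (\<Sum>p\<in>Pi_opt N Us beta c P. mu p)"
    using \<delta>_pos by (simp add: mult_le_cancel_left_pos)
qed

end

theorem lemma2:
  fixes N :: nat and Us :: "nat \<Rightarrow> 'u set" and beta :: "nat \<Rightarrow> real"
    and c :: "nat \<Rightarrow> 'x::finite \<Rightarrow> (nat \<Rightarrow> 'u) \<Rightarrow> real"
    and P :: "'x \<Rightarrow> (nat \<Rightarrow> 'u) \<Rightarrow> 'x \<Rightarrow> real"
  assumes game: "finite_game N Us beta P"
    and ci: "common_interest N Us beta c P"
  shows "(\<forall>lam gam kap h.
            (\<forall>i<N. 0 \<le> lam i \<and> lam i \<le> 1 \<and> 0 < gam i \<and> gam i < 1 \<and> 0 < kap i \<and> kap i < 1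
                   \<and> stoch_kernel (Pol Us i) (h i)) \<longrightarrow>
            (\<exists>!mu. stationary (Pis N Us) (IUP_matrix N Us beta c P lam gam kap h) mu) \<and>
            (\<forall>mu0 mu. is_dist (Pis N Us) mu0 \<longrightarrow>
                stationary (Pis N Us) (IUP_matrix N Us beta c P lam gam kap h) mu \<longrightarrow>
                (\<forall>p. (\<lambda>n. dist_iter (Pis N Us) (IUP_matrix N Us beta c P lam gam kap h) mu0 n p)
                        \<longlonglongrightarrow> mu p)))
       \<and> (\<forall>eps kap. 0 < eps \<and> eps < 1 \<and> (\<forall>i<N. 0 < kap i \<and> kap i < 1) \<longrightarrow>
            (\<exists>gbar > 0. \<forall>lam gam h.
               (\<forall>i<N. 0 \<le> lam i \<and> lam i \<le> 1 \<and> 0 < gam i \<and> gam i < 1 \<and> gam i < gbar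
                      \<and> stoch_kernel (Pol Us i) (h i)) \<longrightarrow>
               (\<forall>mu. stationary (Pis N Us) (IUP_matrix N Us beta c P lam gam kap h) mu \<longrightarrow>
                  (\<Sum>p\<in>Pi_opt N Us beta c P. mu p) \<ge> 1 - eps / 2)))"
proof (rule conjI; intro allI impI)
  fix lam gam kap :: "nat \<Rightarrow> real" and h :: "nat \<Rightarrow> ('x \<Rightarrow> 'u) \<Rightarrow> ('x \<Rightarrow> 'u) set \<Rightarrow> ('x \<Rightarrow> 'u) \<Rightarrow> real"
  assume "\<forall>i<N. 0 \<le> lam i \<and> lam i \<le> 1 \<and> 0 < gam i \<and> gam i < 1 \<and> 0 < kap i \<and> kap i < 1
            \<and> stoch_kernel (Pol Us i) (h i)"
  then show "(\<exists>!mu. stationary (Pis N Us) (IUP_matrix N Us beta c P lam gam kap h) mu) \<and>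
      (\<forall>mu0 mu. is_dist (Pis N Us) mu0 \<longrightarrow>
         stationary (Pis N Us) (IUP_matrix N Us beta c P lam gam kap h) mu \<longrightarrow>
         (\<forall>p. (\<lambda>n. dist_iter (Pis N Us) (IUP_matrix N Us beta c P lam gam kap h) mu0 n p) \<longlonglongrightarrow> mu p))"
    by (intro IUP_ergodic[OF game]) auto
next
  fix eps :: real and kap :: "nat \<Rightarrow> real"
  assume "0 < eps \<and> eps < 1 \<and> (\<forall>i<N. 0 < kap i \<and> kap i < 1)"
  moreover have "Pi_opt N Us beta c P \<noteq> {}" using ci by (simp add: common_interest_def)
  ultimately obtain gbar where "0 < gbar" and concentrates:
    "\<And>lam gam h mu. (\<And>i. i < N \<Longrightarrow> 0 < gam i \<and> gam i < 1 \<and> gam i < gbar) \<Longrightarrow>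
       (\<And>i. i < N \<Longrightarrow> stoch_kernel (Pol Us i) (h i)) \<Longrightarrow>
       stationary (Pis N Us) (IUP_matrix N Us beta c P lam gam kap h) mu \<Longrightarrow>
       1 - eps / 2 \<le> (\<Sum>p\<in>Pi_opt N Us beta c P. mu p)"
    using IUP_stationary_concentrates[OF game] by metis
  then show "\<exists>gbar > 0. \<forall>lam gam h.
      (\<forall>i<N. 0 \<le> lam i \<and> lam i \<le> 1 \<and> 0 < gam i \<and> gam i < 1 \<and> gam i < gbar
             \<and> stoch_kernel (Pol Us i) (h i)) \<longrightarrow>
      (\<forall>mu. stationary (Pis N Us) (IUP_matrix N Us beta c P lam gam kap h) mu \<longrightarrow>
         (\<Sum>p\<in>Pi_opt N Us beta c P. mu p) \<ge> 1 - eps / 2)"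
    by blast
qed

end
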